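(* Let $\mathcal{M}_1$, $\mathcal{M}_2$ and $f$ be real-valued random variables with finite, strictly positive variances, and assume $\mathrm{Cov}[\mathcal{M}_1,f]\neq 0$ and $\mathrm{Cov}[\mathcal{M}_2,f]\neq 0$. Suppose $$\mathrm{Cov}[\mathcal{M}_1,\mathcal{M}_2]\neq \frac{\mathrm{Cov}[\mathcal{M}_2,f]\,\mathrm{Var}[\mathcal{M}_1]}{\mathrm{Cov}[\mathcal{M}_1,f]}\quad\text{and}\quad \mathrm{Cov}[\mathcal{M}_1,\mathcal{M}_2]\neq \frac{\mathrm{Cov}[\mathcal{M}_1,f]\,\mathrm{Var}[\mathcal{M}_2]}{\mathrm{Cov}[\mathcal{M}_2,f]}.$$ Then there exist $w_1,w_2\in\mathbb{R}$ such that $$\rho_{\mathrm{Pearson}}(w_1\mathcal{M}_1+w_2\mathcal{M}_2,\,f)>\max\big(\rho_{\mathrm{Pearson}}(\mathcal{M}_1,f),\,\rho_{\mathrm{Pearson}}(\mathcal{M}_2,f)\big).$$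
   Context: $\mathrm{Cov}[X,Y]$ and $\mathrm{Var}[X]$ denote covariance and variance, and $\rho_{\mathrm{Pearson}}(X,Y)=\mathrm{Cov}[X,Y]/\sqrt{\mathrm{Var}[X]\mathrm{Var}[Y]}$ is Pearson's correlation coefficient (defined whenever both variances are positive). In the paper's setting $\mathcal{M}_1,\mathcal{M}_2$ are two estimation metrics and $f$ the objective evaluation metric, viewed as functions on a finite set of neural architectures (i.e., random variables under the uniform distribution on that set). *)

theory Defs
  imports "HOL-Probability.Probability"
begin

definition cov :: "'a measure \<Rightarrow> ('a \<Rightarrow> real) \<Rightarrow> ('a \<Rightarrow> real) \<Rightarrow> real" where
  "cov M X Y = (\<integral>x. (X x - (\<integral>y. X y \<partial>M)) * (Y x - (\<integral>y. Y y \<partial>M)) \<partial>M)"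

definition var :: "'a measure \<Rightarrow> ('a \<Rightarrow> real) \<Rightarrow> real" where
  "var M X = (\<integral>x. (X x - (\<integral>y. X y \<partial>M))\<^sup>2 \<partial>M)"

definition pearson :: "'a measure \<Rightarrow> ('a \<Rightarrow> real) \<Rightarrow> ('a \<Rightarrow> real) \<Rightarrow> real" where
  "pearson M X Y = cov M X Y / sqrt (var M X * var M Y)"

end

theory Submission
  imports Defs
begin

text \<open>Write \<open>a, b, c\<close> for the variances and the covariance of \<open>M\<^sub>1, M\<^sub>2\<close>, \<open>p, q\<close> for their
covariances with \<open>f\<close>, and \<open>v\<close> for the variance of \<open>f\<close>. The weights
\<open>w\<^sub>1 = b p - c q\<close>, \<open>w\<^sub>2 = a q - c p\<close> are those of the least-squares regression of \<open>f\<close> on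
\<open>M\<^sub>1, M\<^sub>2\<close> (up to the factor \<open>a b - c\<^sup>2\<close>). The combination has covariance
\<open>N = b p\<^sup>2 - 2 c p q + a q\<^sup>2\<close> with \<open>f\<close> and variance \<open>(a b - c\<^sup>2) N\<close>, and the identity
\<open>a N = (a q - c p)\<^sup>2 + p\<^sup>2 (a b - c\<^sup>2)\<close> shows that its correlation with \<open>f\<close> strictly exceeds
\<open>p / sqrt (a v)\<close> as soon as \<open>a q \<noteq> c p\<close>; symmetrically for \<open>M\<^sub>2\<close>. The Gram determinant
\<open>a b - c\<^sup>2\<close> is positive by Cauchy-Schwarz, strictly so because otherwise \<open>c M\<^sub>1 - a M\<^sub>2\<close>
would have variance zero and yet nonzero covariance \<open>c p - a q\<close> with \<open>f\<close>.\<close>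

lemma quadratic_nonneg_imp_square_le:
  fixes a b c :: real
  assumes "0 \<le> a" and nonneg: "\<And>t. 0 \<le> a * t\<^sup>2 + 2 * c * t + b"
  shows "c\<^sup>2 \<le> a * b"
proof (cases "a = 0")
  case True
  have "c = 0"
  proof (rule ccontr)
    assume "c \<noteq> 0"
    then show False using nonneg[of "- (b + 1) / (2 * c)"] True by (simp add: field_simps)
  qed
  then show ?thesis using True by simp
next
  case False
  then have "0 < a" using \<open>0 \<le> a\<close> by simp
  have "0 \<le> a * (- c / a)\<^sup>2 + 2 * c * (- c / a) + b" by (rule nonneg)
  also have "\<dots> = (a * b - c\<^sup>2) / a" using \<open>0 < a\<close> by (simp add: power2_eq_square field_simps)
  finally show ?thesis using \<open>0 < a\<close> by (simp add: zero_le_divide_iff)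
qed

lemma divide_sqrt_less_divide_sqrt:
  fixes p N A B :: real
  assumes "0 < N" "0 < A" "0 < B" and "p\<^sup>2 * B < N\<^sup>2 * A"
  shows "p / sqrt A < N / sqrt B"
proof (cases "p \<le> 0")
  case True
  then have "p / sqrt A \<le> 0" using assms by (simp add: divide_nonpos_pos)
  also have "0 < N / sqrt B" using assms by simp
  finally show ?thesis .
next
  case False
  have "sqrt (p\<^sup>2 * B) < sqrt (N\<^sup>2 * A)" using assms(4) by simp
  then have "p * sqrt B < N * sqrt A" using False assms by (simp add: real_sqrt_mult)
  then show ?thesis using assms by (simp add: divide_less_eq less_divide_eq mult.commute)
qed

lemma correlation_less_regression_correlation:
  fixes a v D N p r :: real
  assumes "0 < a" "0 < v" "0 < D" and gap: "a * N = r\<^sup>2 + p\<^sup>2 * D" and "r \<noteq> 0"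
  shows "p / sqrt (a * v) < N / sqrt (D * N * v)"
proof -
  have less: "p\<^sup>2 * D < a * N" using gap \<open>r \<noteq> 0\<close> by simp
  have "0 \<le> p\<^sup>2 * D" using \<open>0 < D\<close> by simp
  then have "0 < a * N" using less by linarith
  then have "0 < N" using \<open>0 < a\<close> by (simp add: zero_less_mult_iff)
  have "p\<^sup>2 * D * (N * v) < a * N * (N * v)"
    using less \<open>0 < N\<close> \<open>0 < v\<close> by (intro mult_strict_right_mono) auto
  then have "p\<^sup>2 * (D * N * v) < N\<^sup>2 * (a * v)"
    by (simp add: power2_eq_square algebra_simps)
  then show ?thesis
    using \<open>0 < N\<close> assms by (intro divide_sqrt_less_divide_sqrt) auto
qed

lemma regression_correlation_gt:
  fixes a b c p q v :: real
  assumes "0 < a" "0 < b" "0 < v" and "c\<^sup>2 < a * b" and "a * q \<noteq> c * p" "b * p \<noteq> c * q"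
  defines "w1 \<equiv> b * p - c * q" and "w2 \<equiv> a * q - c * p"
  shows "max (p / sqrt (a * v)) (q / sqrt (b * v))
    < (w1 * p + w2 * q) / sqrt ((w1\<^sup>2 * a + 2 * w1 * w2 * c + w2\<^sup>2 * b) * v)"
proof -
  define N where "N = b * p\<^sup>2 - 2 * c * p * q + a * q\<^sup>2"
  have cov_comb: "w1 * p + w2 * q = N"
    and var_comb: "w1\<^sup>2 * a + 2 * w1 * w2 * c + w2\<^sup>2 * b = (a * b - c\<^sup>2) * N"
    and gap1: "a * N = w2\<^sup>2 + p\<^sup>2 * (a * b - c\<^sup>2)"
    and gap2: "b * N = w1\<^sup>2 + q\<^sup>2 * (a * b - c\<^sup>2)"
    unfolding w1_def w2_def N_def by (simp_all add: power2_eq_square algebra_simps)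
  have "w1 \<noteq> 0" "w2 \<noteq> 0" "0 < a * b - c\<^sup>2"
    using assms(4-6) unfolding w1_def w2_def by simp_all
  then have "p / sqrt (a * v) < N / sqrt ((a * b - c\<^sup>2) * N * v)"
    and "q / sqrt (b * v) < N / sqrt ((a * b - c\<^sup>2) * N * v)"
    using assms(1-3) gap1 gap2 by (simp_all add: correlation_less_regression_correlation)
  then show ?thesis unfolding cov_comb var_comb by simp
qed

definition square_integrable :: "'a measure \<Rightarrow> ('a \<Rightarrow> real) \<Rightarrow> bool" where
  "square_integrable M X \<longleftrightarrow> X \<in> borel_measurable M \<and> integrable M (\<lambda>x. (X x)\<^sup>2)"

lemma integrable_mult_if_square_integrable:
  assumes "square_integrable M X" "square_integrable M Y"
  shows "integrable M (\<lambda>x. X x * Y x)"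
proof (rule Bochner_Integration.integrable_bound)
  show "integrable M (\<lambda>x. (X x)\<^sup>2 + (Y x)\<^sup>2)"
    using assms unfolding square_integrable_def by auto
  show "(\<lambda>x. X x * Y x) \<in> borel_measurable M"
    using assms unfolding square_integrable_def by auto
  have "\<bar>X x * Y x\<bar> \<le> (X x)\<^sup>2 + (Y x)\<^sup>2" for x
    using sum_squares_bound[of "\<bar>X x\<bar>" "\<bar>Y x\<bar>"] abs_ge_zero[of "X x * Y x"]
    unfolding abs_mult power2_abs by linarith
  then show "AE x in M. norm (X x * Y x) \<le> norm ((X x)\<^sup>2 + (Y x)\<^sup>2)" by simp
qed

lemma var_eq_cov: "var M X = cov M X X"
  unfolding var_def cov_def by (simp add: power2_eq_square)

lemma cov_commute: "cov M X Y = cov M Y X"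
  unfolding cov_def by (simp add: mult.commute)

context prob_space
begin

lemma integrable_if_square_integrable:
  "square_integrable M X \<Longrightarrow> integrable M X"
  unfolding square_integrable_def by (blast intro: square_integrable_imp_integrable)

lemma square_integrable_lincomb:
  assumes "square_integrable M X" "square_integrable M Y"
  shows "square_integrable M (\<lambda>x. s * X x + t * Y x)"
proof -
  have "(\<lambda>x. (s * X x + t * Y x)\<^sup>2) = (\<lambda>x. s\<^sup>2 * (X x)\<^sup>2 + t\<^sup>2 * (Y x)\<^sup>2 + (2 * s * t) * (X x * Y x))"
    by (simp add: power2_sum power_mult_distrib mult_ac)
  moreover have "integrable M (\<lambda>x. s\<^sup>2 * (X x)\<^sup>2 + t\<^sup>2 * (Y x)\<^sup>2 + (2 * s * t) * (X x * Y x))"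
    using assms integrable_mult_if_square_integrable[OF assms]
    unfolding square_integrable_def by auto
  ultimately show ?thesis
    using assms unfolding square_integrable_def by auto
qed

lemma cov_eq_expectation_mult:
  assumes "square_integrable M X" "square_integrable M Y"
  shows "cov M X Y = expectation (\<lambda>x. X x * Y x) - expectation X * expectation Y"
proof -
  let ?a = "expectation X" and ?b = "expectation Y"
  have "(\<lambda>x. (X x - ?a) * (Y x - ?b)) = (\<lambda>x. X x * Y x - ?b * X x - ?a * Y x + ?a * ?b)"
    by (simp add: algebra_simps)
  moreover have "expectation (\<lambda>x. X x * Y x - ?b * X x - ?a * Y x + ?a * ?b)
      = expectation (\<lambda>x. X x * Y x) - ?b * ?a - ?a * ?b + ?a * ?b"
    using integrable_mult_if_square_integrable[OF assms]
      integrable_if_square_integrable[OF assms(1)] integrable_if_square_integrable[OF assms(2)]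
    by (simp add: prob_space)
  ultimately show ?thesis unfolding cov_def by simp
qed

lemma cov_lincomb_left:
  assumes "square_integrable M X" "square_integrable M Y" "square_integrable M Z"
  shows "cov M (\<lambda>x. s * X x + t * Y x) Z = s * cov M X Z + t * cov M Y Z"
proof -
  have "(\<lambda>x. (s * X x + t * Y x) * Z x) = (\<lambda>x. s * (X x * Z x) + t * (Y x * Z x))"
    by (simp add: algebra_simps)
  then have "expectation (\<lambda>x. (s * X x + t * Y x) * Z x)
      = s * expectation (\<lambda>x. X x * Z x) + t * expectation (\<lambda>x. Y x * Z x)"
    using integrable_mult_if_square_integrable[OF assms(1,3)]
      integrable_mult_if_square_integrable[OF assms(2,3)] by simp
  moreover have "expectation (\<lambda>x. s * X x + t * Y x) = s * expectation X + t * expectation Y"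
    using integrable_if_square_integrable[OF assms(1)] integrable_if_square_integrable[OF assms(2)]
    by simp
  ultimately show ?thesis
    using assms square_integrable_lincomb[OF assms(1,2)]
    by (simp add: cov_eq_expectation_mult algebra_simps)
qed

lemma cov_lincomb_right:
  assumes "square_integrable M X" "square_integrable M Y" "square_integrable M Z"
  shows "cov M Z (\<lambda>x. s * X x + t * Y x) = s * cov M Z X + t * cov M Z Y"
  using cov_lincomb_left[OF assms] by (simp only: cov_commute[of M Z])

lemma var_lincomb:
  assumes "square_integrable M X" "square_integrable M Y"
  shows "var M (\<lambda>x. s * X x + t * Y x) = s\<^sup>2 * var M X + 2 * s * t * cov M X Y + t\<^sup>2 * var M Y"
proof -
  let ?Z = "\<lambda>x. s * X x + t * Y x"
  have "var M ?Z = s * cov M X ?Z + t * cov M Y ?Z"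
    unfolding var_eq_cov using assms square_integrable_lincomb[OF assms] by (rule cov_lincomb_left)
  also have "\<dots> = s * (s * cov M X X + t * cov M X Y) + t * (s * cov M Y X + t * cov M Y Y)"
    using assms by (simp only: cov_lincomb_right)
  also have "\<dots> = s\<^sup>2 * var M X + 2 * s * t * cov M X Y + t\<^sup>2 * var M Y"
    by (simp add: var_eq_cov cov_commute[of M Y X] power2_eq_square algebra_simps)
  finally show ?thesis .
qed

lemma pearson_lincomb:
  assumes "square_integrable M X" "square_integrable M Y" "square_integrable M Z"
  shows "pearson M (\<lambda>x. s * X x + t * Y x) Z = (s * cov M X Z + t * cov M Y Z)
    / sqrt ((s\<^sup>2 * var M X + 2 * s * t * cov M X Y + t\<^sup>2 * var M Y) * var M Z)"
  unfolding pearson_def cov_lincomb_left[OF assms] var_lincomb[OF assms(1,2)] ..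

lemma var_nonneg: "0 \<le> var M X"
  unfolding var_def by (rule variance_positive)

lemma cov_square_le_var_mult:
  assumes "square_integrable M X" "square_integrable M Y"
  shows "(cov M X Y)\<^sup>2 \<le> var M X * var M Y"
proof (rule quadratic_nonneg_imp_square_le)
  show "0 \<le> var M X" by (rule var_nonneg)
  show "0 \<le> var M X * t\<^sup>2 + 2 * cov M X Y * t + var M Y" for t
    using var_nonneg[of "\<lambda>x. t * X x + 1 * Y x"] var_lincomb[OF assms, of t 1]
    by (simp add: algebra_simps)
qed

lemma cov_square_less_var_mult:
  assumes "square_integrable M X" "square_integrable M Y" "square_integrable M Z"
    and "0 < var M X" and "var M X * cov M Y Z \<noteq> cov M X Y * cov M X Z"
  shows "(cov M X Y)\<^sup>2 < var M X * var M Y"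
proof -
  let ?a = "var M X" and ?c = "cov M X Y"
  let ?W = "\<lambda>x. ?c * X x + (- ?a) * Y x"
  have "var M ?W = ?c\<^sup>2 * ?a + 2 * ?c * (- ?a) * ?c + (- ?a)\<^sup>2 * var M Y"
    by (rule var_lincomb[OF assms(1,2)])
  also have "\<dots> = ?a * (?a * var M Y - ?c\<^sup>2)" by (simp add: power2_eq_square algebra_simps)
  finally have var_W: "var M ?W = ?a * (?a * var M Y - ?c\<^sup>2)" .
  have "cov M Z ?W = ?c * cov M Z X + (- ?a) * cov M Z Y"
    using assms(1-3) by (rule cov_lincomb_right)
  then have "0 < (cov M Z ?W)\<^sup>2"
    using assms(5) by (simp add: cov_commute[of M Z])
  also have "\<dots> \<le> var M Z * var M ?W"
    using assms by (intro cov_square_le_var_mult square_integrable_lincomb)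
  finally have "0 < var M ?W"
    using var_nonneg[of Z] by (simp add: zero_less_mult_iff)
  then show ?thesis
    unfolding var_W using \<open>0 < ?a\<close> by (simp add: zero_less_mult_iff)
qed

end

theorem proposition1:
  fixes M :: "'a measure" and M1 M2 f :: "'a \<Rightarrow> real"
  assumes "prob_space M"
    and "M1 \<in> borel_measurable M" and "M2 \<in> borel_measurable M" and "f \<in> borel_measurable M"
    and "integrable M (\<lambda>x. (M1 x)\<^sup>2)" and "integrable M (\<lambda>x. (M2 x)\<^sup>2)"
    and "integrable M (\<lambda>x. (f x)\<^sup>2)"
    and "var M M1 > 0" and "var M M2 > 0" and "var M f > 0"
    and "cov M M1 f \<noteq> 0" and "cov M M2 f \<noteq> 0"
    and "cov M M1 M2 \<noteq> cov M M2 f * var M M1 / cov M M1 f"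
    and "cov M M1 M2 \<noteq> cov M M1 f * var M M2 / cov M M2 f"
  shows "\<exists>w1 w2 :: real.
           pearson M (\<lambda>x. w1 * M1 x + w2 * M2 x) f
             > max (pearson M M1 f) (pearson M M2 f)"
proof -
  interpret prob_space M by fact
  have sq: "square_integrable M M1" "square_integrable M M2" "square_integrable M f"
    using assms unfolding square_integrable_def by auto
  define a b c p q v where "a = var M M1" and "b = var M M2" and "c = cov M M1 M2"
    and "p = cov M M1 f" and "q = cov M M2 f" and "v = var M f"
  define w1 w2 where "w1 = b * p - c * q" and "w2 = a * q - c * p"
  have "0 < a" "0 < b" "0 < v"
    using assms(8-10) unfolding a_def b_def v_def by simp_all
  have "a * q \<noteq> c * p" "b * p \<noteq> c * q"
    using assms(11-14) unfolding a_def b_def c_def p_def q_def by (auto simp: field_simps)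
  have "c\<^sup>2 < a * b"
    using cov_square_less_var_mult[OF sq assms(8)] \<open>a * q \<noteq> c * p\<close>
    unfolding a_def b_def c_def p_def q_def by blast
  have "max (pearson M M1 f) (pearson M M2 f) = max (p / sqrt (a * v)) (q / sqrt (b * v))"
    unfolding pearson_def a_def b_def p_def q_def v_def ..
  also have "\<dots> < (w1 * p + w2 * q) / sqrt ((w1\<^sup>2 * a + 2 * w1 * w2 * c + w2\<^sup>2 * b) * v)"
    unfolding w1_def w2_def by (rule regression_correlation_gt) fact+
  also have "\<dots> = pearson M (\<lambda>x. w1 * M1 x + w2 * M2 x) f"
    unfolding a_def b_def c_def p_def q_def v_def by (rule pearson_lincomb[OF sq, symmetric])
  finally show ?thesis by blast
qed

end
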